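(* Let $G$ be a connected simple graph with $n\ge 2$ vertices and $m$ edges. Then \[ \mathscr{K}_e(G)=\mathscr{K}_v(G)+2m-n . \]
   Context: Kemeny's constant of an irreducible finite Markov chain with transition matrix $P$ whose eigenvalues (with multiplicity) are $1=\rho_1,\rho_2,\dots,\rho_N$ (with $1$ a simple eigenvalue) is $\mathscr{K}(P)=\sum_{i=2}^{N}\frac{1}{1-\rho_i}$; equivalently $\mathscr{K}(P)=\sum_{j\ne i}\pi_j m_{ij}$ (independent of $i$), where $\pi$ is the stationary distribution and $m_{ij}$ the mean first passage time from state $i$ to state $j$. The vertex Kemeny's constant $\mathscr{K}_v(G)$ is Kemeny's constant of the simple random walk on the vertices of $G$, with transition matrix $P=D^{-1}A$ ($A$ the adjacency matrix, $D$ the diagonal degree matrix). The edge Kemeny's constant $\mathscr{K}_e(G)$ is Kemeny's constant of the simple random walk on the arcs of $G$: the states are the $2m$ arcs $(u,v)$ with $\{u,v\}\in E(G)$, and from arc $(u,v)$ the walk moves to arc $(v,w)$ with probability $1/\deg(v)$ for each neighbor $w$ of $v$ (including $w=u$), all other transition probabilities being $0$. *)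

theory Defs
  imports "Jordan_Normal_Form.Char_Poly" "HOL-Computational_Algebra.Polynomial"
begin

definition kemeny_mat :: "complex mat \<Rightarrow> complex" where
  "kemeny_mat A = (\<Sum>\<rho> \<in># proots (char_poly A) - {#1#}. 1 / (1 - \<rho>))"

(* Kemeny's constant of a Markov chain on a finite state set S with transition
   probabilities p, via the transition matrix with respect to some enumeration of S
   (the spectrum does not depend on the enumeration). *)
definition kemeny :: "'s set \<Rightarrow> ('s \<Rightarrow> 's \<Rightarrow> real) \<Rightarrow> complex" where
  "kemeny S p = (let xs = (SOME xs. distinct xs \<and> set xs = S) in
     kemeny_mat (mat (length xs) (length xs)
       (\<lambda>(i, j). complex_of_real (p (xs ! i) (xs ! j)))))"

definition simple_graph :: "'a set \<Rightarrow> ('a \<Rightarrow> 'a \<Rightarrow> bool) \<Rightarrow> bool" where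
  "simple_graph V E \<longleftrightarrow> finite V \<and> (\<forall>u v. E u v \<longrightarrow> u \<in> V \<and> v \<in> V)
     \<and> (\<forall>u v. E u v \<longrightarrow> E v u) \<and> (\<forall>u. \<not> E u u)"

definition connected_graph :: "'a set \<Rightarrow> ('a \<Rightarrow> 'a \<Rightarrow> bool) \<Rightarrow> bool" where
  "connected_graph V E \<longleftrightarrow> (\<forall>u\<in>V. \<forall>v\<in>V. E\<^sup>*\<^sup>* u v)"

definition degree :: "'a set \<Rightarrow> ('a \<Rightarrow> 'a \<Rightarrow> bool) \<Rightarrow> 'a \<Rightarrow> nat" where
  "degree V E v = card {w \<in> V. E v w}"

definition edges :: "'a set \<Rightarrow> ('a \<Rightarrow> 'a \<Rightarrow> bool) \<Rightarrow> 'a set set" where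
  "edges V E = {{u, v} | u v. u \<in> V \<and> v \<in> V \<and> E u v}"

definition arcs :: "'a set \<Rightarrow> ('a \<Rightarrow> 'a \<Rightarrow> bool) \<Rightarrow> ('a \<times> 'a) set" where
  "arcs V E = {(u, v). u \<in> V \<and> v \<in> V \<and> E u v}"

definition vertex_walk :: "'a set \<Rightarrow> ('a \<Rightarrow> 'a \<Rightarrow> bool) \<Rightarrow> 'a \<Rightarrow> 'a \<Rightarrow> real" where
  "vertex_walk V E u w = (if E u w then 1 / real (degree V E u) else 0)"

definition arc_walk :: "'a set \<Rightarrow> ('a \<Rightarrow> 'a \<Rightarrow> bool) \<Rightarrow> 'a \<times> 'a \<Rightarrow> 'a \<times> 'a \<Rightarrow> real" where
  "arc_walk V E a b = (if fst b = snd a \<and> E (fst b) (snd b)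
                        then 1 / real (degree V E (snd a)) else 0)"

definition vertex_kemeny :: "'a set \<Rightarrow> ('a \<Rightarrow> 'a \<Rightarrow> bool) \<Rightarrow> complex" where
  "vertex_kemeny V E = kemeny V (vertex_walk V E)"

definition edge_kemeny :: "'a set \<Rightarrow> ('a \<Rightarrow> 'a \<Rightarrow> bool) \<Rightarrow> complex" where
  "edge_kemeny V E = kemeny (arcs V E) (arc_walk V E)"

end

theory Submission
  imports Defs
begin

text \<open>
  The arc walk factors through the vertices: from an arc one first passes to its head
  (an arcs \<times> vertices 0/1 matrix \<open>H\<close>) and then leaves that head along a uniformly chosen
  arc (a vertices \<times> arcs matrix \<open>K\<close>). Hence \<open>P\<^sub>e = H K\<close> while \<open>P\<^sub>v = K H\<close>, and
  Sylvester's determinant identity gives \<open>x\<^sup>n \<chi>\<^sub>H\<^sub>K(x) = x\<^sup>2\<^sup>m \<chi>\<^sub>K\<^sub>H(x)\<close>: the spectrum of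
  \<open>P\<^sub>e\<close> is that of \<open>P\<^sub>v\<close> plus \<open>2m - n\<close> extra zeros, each contributing \<open>1/(1 - 0) = 1\<close>.
  The argument is purely algebraic.
\<close>

lemma sylvester_block_product_left:
  fixes A B :: "'a :: comm_ring_1 mat"
  assumes A: "A \<in> carrier_mat n k" and B: "B \<in> carrier_mat k n"
  shows "four_block_mat (x \<cdot>\<^sub>m 1\<^sub>m n) (- A) (0\<^sub>m k n) (1\<^sub>m k) * four_block_mat (1\<^sub>m n) A B (x \<cdot>\<^sub>m 1\<^sub>m k)
       = four_block_mat (x \<cdot>\<^sub>m 1\<^sub>m n - A * B) (0\<^sub>m n k) B (x \<cdot>\<^sub>m 1\<^sub>m k)"
proof -
  have "x \<cdot>\<^sub>m 1\<^sub>m n * 1\<^sub>m n + - A * B = x \<cdot>\<^sub>m 1\<^sub>m n - A * B"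
    using A B by (simp add: add_uminus_minus_mat[of _ n n])
  moreover have "x \<cdot>\<^sub>m 1\<^sub>m n * A + - A * (x \<cdot>\<^sub>m 1\<^sub>m k) = 0\<^sub>m n k"
    using A mult_smult_assoc_mat[OF one_carrier_mat A] mult_smult_distrib[OF A one_carrier_mat]
    by (simp add: add_uminus_minus_mat[of _ n k])
  ultimately show ?thesis
    using A B by (subst mult_four_block_mat[of _ n n _ k _ k _ _ n _ k]) auto
qed

lemma sylvester_block_product_right:
  fixes A B :: "'a :: comm_ring_1 mat"
  assumes A: "A \<in> carrier_mat n k" and B: "B \<in> carrier_mat k n"
  shows "four_block_mat (1\<^sub>m n) A B (x \<cdot>\<^sub>m 1\<^sub>m k) * four_block_mat (x \<cdot>\<^sub>m 1\<^sub>m n) (- A) (0\<^sub>m k n) (1\<^sub>m k)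
       = four_block_mat (x \<cdot>\<^sub>m 1\<^sub>m n) (0\<^sub>m n k) (x \<cdot>\<^sub>m B) (x \<cdot>\<^sub>m 1\<^sub>m k - B * A)"
proof -
  have "1\<^sub>m n * - A + A * 1\<^sub>m k = 0\<^sub>m n k"
    using A by simp
  moreover have "B * (x \<cdot>\<^sub>m 1\<^sub>m n) + x \<cdot>\<^sub>m 1\<^sub>m k * 0\<^sub>m k n = x \<cdot>\<^sub>m B"
    using B mult_smult_distrib[OF B one_carrier_mat] by simp
  moreover have "B * - A + x \<cdot>\<^sub>m 1\<^sub>m k * 1\<^sub>m k = x \<cdot>\<^sub>m 1\<^sub>m k - B * A"
    using A B by (simp add: add_uminus_minus_mat[of _ k k] comm_add_mat[of "- (B * A)" k k])
  ultimately show ?thesis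
    using A B by (subst mult_four_block_mat[of _ n n _ k _ k _ _ n _ k]) auto
qed

lemma det_sylvester:
  fixes A B :: "'a :: idom mat"
  assumes A: "A \<in> carrier_mat n k" and B: "B \<in> carrier_mat k n"
  shows "x ^ k * det (x \<cdot>\<^sub>m 1\<^sub>m n - A * B) = x ^ n * det (x \<cdot>\<^sub>m 1\<^sub>m k - B * A)"
proof -
  define M where "M = four_block_mat (1\<^sub>m n) A B (x \<cdot>\<^sub>m 1\<^sub>m k)"
  define L where "L = four_block_mat (x \<cdot>\<^sub>m 1\<^sub>m n) (- A) (0\<^sub>m k n) (1\<^sub>m k)"
  have M: "M \<in> carrier_mat (n + k) (n + k)" and L: "L \<in> carrier_mat (n + k) (n + k)"
    unfolding M_def L_def using A B by auto
  have "det L * det M = det (x \<cdot>\<^sub>m 1\<^sub>m n - A * B) * x ^ k"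
  proof -
    have "det L * det M = det (L * M)" using det_mult[OF L M] by simp
    also have "\<dots> = det (x \<cdot>\<^sub>m 1\<^sub>m n - A * B) * det (x \<cdot>\<^sub>m 1\<^sub>m k)"
      unfolding L_def M_def sylvester_block_product_left[OF A B]
      using A B by (intro det_four_block_mat_upper_right_zero) auto
    finally show ?thesis by simp
  qed
  moreover have "det M * det L = x ^ n * det (x \<cdot>\<^sub>m 1\<^sub>m k - B * A)"
  proof -
    have "det M * det L = det (M * L)" using det_mult[OF M L] by simp
    also have "\<dots> = det (x \<cdot>\<^sub>m 1\<^sub>m n) * det (x \<cdot>\<^sub>m 1\<^sub>m k - B * A)"
      unfolding L_def M_def sylvester_block_product_right[OF A B]
      using A B by (intro det_four_block_mat_upper_right_zero) auto
    finally show ?thesis by simp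
  qed
  moreover have "det L = x ^ n"
    unfolding L_def using A by (subst det_four_block_mat_lower_left_zero[of _ n _ k]) auto
  ultimately show ?thesis
    by (metis mult.commute)
qed

lemma char_poly_mult_commute:
  fixes A B :: "'a :: field_char_0 mat"
  assumes A: "A \<in> carrier_mat n k" and B: "B \<in> carrier_mat k n"
  shows "[:0, 1:] ^ k * char_poly (A * B) = [:0, 1:] ^ n * char_poly (B * A)"
proof -
  have neg_char_matrix: "- char_matrix C x = x \<cdot>\<^sub>m 1\<^sub>m m - C" if "C \<in> carrier_mat m m" for C x m
    using that by (intro eq_matI) (auto simp: char_matrix_def)
  have AB: "A * B \<in> carrier_mat n n" and BA: "B * A \<in> carrier_mat k k"
    using A B by auto
  show ?thesis
    unfolding poly_eq_poly_eq_iff[symmetric]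
    by (intro ext) (simp add: poly_mult poly_power char_poly_matrix[OF AB] char_poly_matrix[OF BA]
        neg_char_matrix[OF AB] neg_char_matrix[OF BA] det_sylvester[OF A B])
qed

lemma kemeny_mat_extra_zero_eigenvalues:
  fixes P Q :: "complex mat"
  assumes P: "P \<in> carrier_mat N N" and Q: "Q \<in> carrier_mat n n"
    and char_poly_eq: "[:0, 1:] ^ n * char_poly P = [:0, 1:] ^ N * char_poly Q"
  shows "kemeny_mat P = kemeny_mat Q + of_nat N - of_nat n"
proof -
  have drop_one: "replicate_mset m 0 + R - {#1#} = replicate_mset m 0 + (R - {#1#})"
    for m and R :: "complex multiset"
    by (intro multiset_eqI) auto
  have "char_poly P \<noteq> 0" "char_poly Q \<noteq> 0"
    using degree_monic_char_poly[OF P] degree_monic_char_poly[OF Q] by auto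
  then have "replicate_mset n 0 + proots (char_poly P) = replicate_mset N 0 + proots (char_poly Q)"
    using arg_cong[OF char_poly_eq, of proots] by (simp add: proots_mult proots_power)
  then have roots_eq: "replicate_mset n 0 + (proots (char_poly P) - {#1#})
           = replicate_mset N 0 + (proots (char_poly Q) - {#1#})"
    by (simp only: drop_one[symmetric])
  have "of_nat n + kemeny_mat P = of_nat N + kemeny_mat Q"
    using arg_cong[OF roots_eq, of "\<lambda>M. \<Sum>\<rho>\<in>#M. 1 / (1 - \<rho>)"]
    unfolding kemeny_mat_def by simp
  then show ?thesis
    by (simp add: algebra_simps)
qed

definition enum_mat :: "'r list \<Rightarrow> 'c list \<Rightarrow> ('r \<Rightarrow> 'c \<Rightarrow> 'a) \<Rightarrow> 'a mat" where
  "enum_mat xs ys f = mat (length xs) (length ys) (\<lambda>(i, j). f (xs ! i) (ys ! j))"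

lemma enum_mat_carrier [simp]: "enum_mat xs ys f \<in> carrier_mat (length xs) (length ys)"
  by (simp add: enum_mat_def)

lemma enum_mat_cong:
  assumes "\<And>a b. a \<in> set xs \<Longrightarrow> b \<in> set ys \<Longrightarrow> f a b = g a b"
  shows "enum_mat xs ys f = enum_mat xs ys g"
  using assms unfolding enum_mat_def by (intro eq_matI) auto

lemma enum_mat_mult:
  fixes f :: "'r \<Rightarrow> 'b \<Rightarrow> 'a :: comm_semiring_0"
  assumes "distinct ys"
  shows "enum_mat xs ys f * enum_mat ys zs g = enum_mat xs zs (\<lambda>a c. \<Sum>b\<in>set ys. f a b * g b c)"
proof (rule eq_matI)
  fix i l assume "i < dim_row (enum_mat xs zs (\<lambda>a c. \<Sum>b\<in>set ys. f a b * g b c))"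
    and "l < dim_col (enum_mat xs zs (\<lambda>a c. \<Sum>b\<in>set ys. f a b * g b c))"
  then have i: "i < length xs" and l: "l < length zs"
    by (simp_all add: enum_mat_def)
  have "(\<Sum>j\<in>{0..<length ys}. f (xs ! i) (ys ! j) * g (ys ! j) (zs ! l))
      = (\<Sum>b\<in>set ys. f (xs ! i) b * g b (zs ! l))"
    using sum.reindex_bij_betw[OF bij_betw_nth[OF assms _ refl], of "{0..<length ys}"]
    by (simp add: atLeast0LessThan)
  then show "(enum_mat xs ys f * enum_mat ys zs g) $$ (i, l)
      = enum_mat xs zs (\<lambda>a c. \<Sum>b\<in>set ys. f a b * g b c) $$ (i, l)"
    using i l by (simp add: enum_mat_def scalar_prod_def)
qed (simp_all add: enum_mat_def)

text \<open>The enumeration chosen by \<open>kemeny\<close> is only known to exist.\<close>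

lemma kemeny_eq_kemeny_mat_enum:
  assumes "finite S"
  obtains xs where "distinct xs" "set xs = S"
    "kemeny S p = kemeny_mat (enum_mat xs xs (\<lambda>s t. complex_of_real (p s t)))"
proof
  define xs where "xs = (SOME xs. distinct xs \<and> set xs = S)"
  have "\<exists>xs. distinct xs \<and> set xs = S"
    using finite_distinct_list[OF assms] by blast
  from someI_ex[OF this] show "distinct xs" "set xs = S"
    unfolding xs_def by auto
  show "kemeny S p = kemeny_mat (enum_mat xs xs (\<lambda>s t. complex_of_real (p s t)))"
    unfolding kemeny_def enum_mat_def xs_def Let_def by simp
qed

lemma finite_arcs: "simple_graph V E \<Longrightarrow> finite (arcs V E)"
  unfolding simple_graph_def arcs_def
  by (rule finite_subset[of _ "V \<times> V"]) auto

lemma card_arcs: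
  assumes G: "simple_graph V E"
  shows "card (arcs V E) = 2 * card (edges V E)"
proof -
  let ?edge = "\<lambda>(u, v). {u, v}"
  have fibre: "{a \<in> arcs V E. ?edge a = e} = {(u, v), (v, u)}"
    if "e = {u, v}" "u \<in> V" "v \<in> V" "E u v" for e u v
    using G that unfolding simple_graph_def arcs_def by (auto simp: doubleton_eq_iff)
  have "card (arcs V E) = (\<Sum>e\<in>?edge ` arcs V E. card {a \<in> arcs V E. ?edge a = e})"
    using card_eq_sum sum.image_gen[OF finite_arcs[OF G], of "\<lambda>_. 1 :: nat" ?edge] by simp
  also have "?edge ` arcs V E = edges V E"
    unfolding arcs_def edges_def by auto
  also have "(\<Sum>e\<in>edges V E. card {a \<in> arcs V E. ?edge a = e}) = (\<Sum>e\<in>edges V E. 2)"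
  proof (rule sum.cong)
    fix e assume "e \<in> edges V E"
    then obtain u v where "e = {u, v}" "u \<in> V" "v \<in> V" "E u v"
      unfolding edges_def by blast
    moreover have "u \<noteq> v"
      using G \<open>E u v\<close> unfolding simple_graph_def by auto
    ultimately show "card {a \<in> arcs V E. ?edge a = e} = 2"
      by (simp add: fibre)
  qed simp
  finally show ?thesis
    by simp
qed

definition head_incidence :: "'a \<times> 'a \<Rightarrow> 'a \<Rightarrow> complex" where
  "head_incidence a v = (if snd a = v then 1 else 0)"

definition departure_prob :: "'a set \<Rightarrow> ('a \<Rightarrow> 'a \<Rightarrow> bool) \<Rightarrow> 'a \<Rightarrow> 'a \<times> 'a \<Rightarrow> complex" where
  "departure_prob V E v a = (if fst a = v then 1 / of_nat (degree V E v) else 0)"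

lemma arc_walk_factorization:
  assumes G: "simple_graph V E" and "a \<in> arcs V E" "b \<in> arcs V E"
  shows "complex_of_real (arc_walk V E a b) = (\<Sum>v\<in>V. head_incidence a v * departure_prob V E v b)"
proof -
  have "(\<Sum>v\<in>V. head_incidence a v * departure_prob V E v b)
      = (\<Sum>v\<in>V. if snd a = v then departure_prob V E v b else 0)"
    unfolding head_incidence_def by (intro sum.cong) auto
  also have "\<dots> = departure_prob V E (snd a) b"
    using G assms(2) unfolding simple_graph_def arcs_def by (auto simp: sum.delta)
  finally show ?thesis
    using assms(3) unfolding arc_walk_def departure_prob_def arcs_def by auto
qed

lemma vertex_walk_factorization:
  assumes G: "simple_graph V E" and "u \<in> V" "w \<in> V"
  shows "complex_of_real (vertex_walk V E u w)
       = (\<Sum>a\<in>arcs V E. departure_prob V E u a * head_incidence a w)"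
proof -
  have "(\<Sum>a\<in>arcs V E. departure_prob V E u a * head_incidence a w)
      = (\<Sum>a\<in>arcs V E. if a = (u, w) then 1 / of_nat (degree V E u) else 0)"
    unfolding departure_prob_def head_incidence_def by (intro sum.cong) auto
  then show ?thesis
    using assms finite_arcs[OF G] unfolding vertex_walk_def arcs_def by (simp add: sum.delta')
qed

theorem theorem2p9:
  fixes V :: "'a set" and E :: "'a \<Rightarrow> 'a \<Rightarrow> bool"
  assumes "simple_graph V E" and "connected_graph V E" and "card V \<ge> 2"
  shows "edge_kemeny V E
           = vertex_kemeny V E + of_nat (2 * card (edges V E)) - of_nat (card V)"
proof -
  note G = assms(1)
  obtain xs where xs: "distinct xs" "set xs = V"
    and vertex: "vertex_kemeny V E = kemeny_mat (enum_mat xs xs (\<lambda>u w. of_real (vertex_walk V E u w)))"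
    using G unfolding vertex_kemeny_def simple_graph_def by (metis kemeny_eq_kemeny_mat_enum)
  obtain ys where ys: "distinct ys" "set ys = arcs V E"
    and edge: "edge_kemeny V E = kemeny_mat (enum_mat ys ys (\<lambda>a b. of_real (arc_walk V E a b)))"
    using finite_arcs[OF G] unfolding edge_kemeny_def by (metis kemeny_eq_kemeny_mat_enum)
  define H where "H = enum_mat ys xs head_incidence"
  define K where "K = enum_mat xs ys (departure_prob V E)"
  have "enum_mat ys ys (\<lambda>a b. of_real (arc_walk V E a b)) = H * K"
    unfolding H_def K_def enum_mat_mult[OF xs(1)] xs(2) ys(2)
    by (intro enum_mat_cong) (simp add: ys(2) arc_walk_factorization[OF G])
  moreover have "enum_mat xs xs (\<lambda>u w. of_real (vertex_walk V E u w)) = K * H"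
    unfolding H_def K_def enum_mat_mult[OF ys(1)] xs(2) ys(2)
    by (intro enum_mat_cong) (simp add: xs(2) vertex_walk_factorization[OF G])
  moreover have "[:0, 1:] ^ length xs * char_poly (H * K) = [:0, 1:] ^ length ys * char_poly (K * H)"
    unfolding H_def K_def by (intro char_poly_mult_commute) auto
  then have "kemeny_mat (H * K) = kemeny_mat (K * H) + of_nat (length ys) - of_nat (length xs)"
    by (rule kemeny_mat_extra_zero_eigenvalues[rotated 2]) (simp_all add: H_def K_def mult_carrier_mat[OF enum_mat_carrier enum_mat_carrier])
  moreover have "length xs = card V" "length ys = 2 * card (edges V E)"
    using xs ys card_arcs[OF G] by (metis distinct_card)+
  ultimately show ?thesis
    unfolding vertex edge by simp
qed

end
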